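(* Let $\mathbf z(k)=\mathbf y-\mathbf u(k)$. For every $k\ge0$ and $\eta>0$, entrywise, $$\big(\mathbf I-2\eta(\tilde{\mathbf H}^+(k)+\mathbf H^-(k))\mathbf P\big)\mathbf z(k)\ \le\ \mathbf z(k+1)\ \le\ \big(\mathbf I-2\eta(\mathbf H^+(k)+\tilde{\mathbf H}^-(k))\mathbf P\big)\mathbf z(k).$$
   Context: Setup: distinct $\mathbf x_1,\dots,\mathbf x_n\in\mathbb S^{d-1}$, labels $\mathbf y\in\mathbb R^n$; network $\mathcal N(\mathbf x)=\frac1{\sqrt m}\sum_{r=1}^ma_r\mathrm{ReLU}(\mathbf w_r^\top\mathbf x+b_r)$ with fixed $a_r\in\{\pm1\}$; $\mathbf P$ symmetric positive definite; gradient descent with step $\eta$ on $\mathbf w_r,b_r$ for the loss $\frac12(\mathbf y-\mathbf u)^\top\mathbf P(\mathbf y-\mathbf u)$, using $\mathrm{ReLU}'(t)=\mathbb 1_{\{t\ge0\}}$; $\mathbf u(k)=(\mathcal N_k(\mathbf x_i))_i$ after $k$ steps. Write $\tilde{\mathbf x}_i=\frac1{\sqrt2}(\mathbf x_i,1)\in\mathbb R^{d+1}$, $\tilde{\mathbf w}_r(k)=(\mathbf w_r(k),b_r(k))\in\mathbb R^{d+1}$, $\mathcal A=\{r:a_r=1\}$, $\mathcal B=\{r:a_r=-1\}$. Define $H^\pm_{ij}(k)=\frac1m\tilde{\mathbf x}_i^\top\tilde{\mathbf x}_j\sum_{r\in\mathcal A\text{ (resp. }\mathcal B)}\mathbb 1_{\{\tilde{\mathbf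 w}_r(k)^\top\tilde{\mathbf x}_i\ge0,\ \tilde{\mathbf w}_r(k)^\top\tilde{\mathbf x}_j\ge0\}}$ ($+$ with $\mathcal A$, $-$ with $\mathcal B$), and $\tilde H^\pm_{ij}(k)=\frac1m\tilde{\mathbf x}_i^\top\tilde{\mathbf x}_j\sum_{r\in\mathcal A\text{ (resp. }\mathcal B)}\mathbb 1_{\{\tilde{\mathbf w}_r(k+1)^\top\tilde{\mathbf x}_i\ge0,\ \tilde{\mathbf w}_r(k)^\top\tilde{\mathbf x}_j\ge0\}}$. *)

theory Defs
  imports "HOL-Analysis.Analysis"
begin

text \<open>Index types: 'd (input coordinates, d = CARD('d)), 'n (samples, n = CARD('n)),
  'm (hidden neurons, m = CARD('m)).  The lifted space R^(d+1) is (real^'d) \<times> real,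
  with the product inner product.\<close>

definition relu :: "real \<Rightarrow> real" where
  "relu t = max 0 t"

definition relu' :: "real \<Rightarrow> real" where
  "relu' t = (if 0 \<le> t then 1 else 0)"

definition net :: "('m::finite \<Rightarrow> real) \<Rightarrow> ('m \<Rightarrow> real^'d) \<Rightarrow> ('m \<Rightarrow> real) \<Rightarrow> real^'d \<Rightarrow> real" where
  "net a w b v = (1 / sqrt (real CARD('m))) * (\<Sum>r\<in>UNIV. a r * relu (w r \<bullet> v + b r))"

definition outputs :: "('m::finite \<Rightarrow> real) \<Rightarrow> ('m \<Rightarrow> real^'d) \<Rightarrow> ('m \<Rightarrow> real)
    \<Rightarrow> ('n::finite \<Rightarrow> real^'d) \<Rightarrow> real^'n" where
  "outputs a w b X = (\<chi> i. net a w b (X i))"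

text \<open>Gradient of the loss 1/2 (y-u)^T P (y-u) with respect to u.\<close>
definition loss_grad_u :: "real^'n^'n \<Rightarrow> real^'n \<Rightarrow> real^'n \<Rightarrow> real^'n::finite" where
  "loss_grad_u P y u = - (scaleR (1/2) ((P + transpose P) *v (y - u)))"

text \<open>One gradient descent step on all w_r, b_r (chain rule with the ReLU' convention).\<close>
definition gd_step :: "('m::finite \<Rightarrow> real) \<Rightarrow> ('n::finite \<Rightarrow> real^'d) \<Rightarrow> real^'n \<Rightarrow> real^'n^'n \<Rightarrow> real
    \<Rightarrow> ('m \<Rightarrow> real^'d) \<times> ('m \<Rightarrow> real) \<Rightarrow> ('m \<Rightarrow> real^'d) \<times> ('m \<Rightarrow> real)" where
  "gd_step a X y P \<eta> wb =
     (let w = fst wb; b = snd wb; g = loss_grad_u P y (outputs a w b X);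
          c = (\<lambda>r i. g $ i * (1 / sqrt (real CARD('m))) * a r * relu' (w r \<bullet> X i + b r))
      in (\<lambda>r. w r - \<eta> *\<^sub>R (\<Sum>i\<in>UNIV. c r i *\<^sub>R X i),
          \<lambda>r. b r - \<eta> * (\<Sum>i\<in>UNIV. c r i)))"

primrec gd_traj :: "('m::finite \<Rightarrow> real) \<Rightarrow> ('n::finite \<Rightarrow> real^'d) \<Rightarrow> real^'n \<Rightarrow> real^'n^'n \<Rightarrow> real
    \<Rightarrow> ('m \<Rightarrow> real^'d) \<Rightarrow> ('m \<Rightarrow> real) \<Rightarrow> nat \<Rightarrow> ('m \<Rightarrow> real^'d) \<times> ('m \<Rightarrow> real)" where
  "gd_traj a X y P \<eta> w0 b0 0 = (w0, b0)"
| "gd_traj a X y P \<eta> w0 b0 (Suc k) = gd_step a X y P \<eta> (gd_traj a X y P \<eta> w0 b0 k)"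

definition u_k :: "('m::finite \<Rightarrow> real) \<Rightarrow> ('n::finite \<Rightarrow> real^'d) \<Rightarrow> real^'n \<Rightarrow> real^'n^'n \<Rightarrow> real
    \<Rightarrow> ('m \<Rightarrow> real^'d) \<Rightarrow> ('m \<Rightarrow> real) \<Rightarrow> nat \<Rightarrow> real^'n" where
  "u_k a X y P \<eta> w0 b0 k = (let wb = gd_traj a X y P \<eta> w0 b0 k in outputs a (fst wb) (snd wb) X)"

definition xt :: "('n \<Rightarrow> real^'d) \<Rightarrow> 'n \<Rightarrow> (real^'d) \<times> real" where
  "xt X i = (1 / sqrt 2) *\<^sub>R (X i, 1)"

definition wt :: "('m::finite \<Rightarrow> real) \<Rightarrow> ('n::finite \<Rightarrow> real^'d) \<Rightarrow> real^'n \<Rightarrow> real^'n^'n \<Rightarrow> real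
    \<Rightarrow> ('m \<Rightarrow> real^'d) \<Rightarrow> ('m \<Rightarrow> real) \<Rightarrow> nat \<Rightarrow> 'm \<Rightarrow> (real^'d) \<times> real" where
  "wt a X y P \<eta> w0 b0 k r = (let wb = gd_traj a X y P \<eta> w0 b0 k in (fst wb r, snd wb r))"

text \<open>Gram-type matrix: entry (i,j) = (1/m) x~_i.x~_j * #{r in S. W1 r . x~_i >= 0 and W2 r . x~_j >= 0}.
  H^+(k) = Hmat A (w~(k)) (w~(k)),  H~^+(k) = Hmat A (w~(k+1)) (w~(k)), similarly with B.\<close>
definition Hmat :: "'m::finite set \<Rightarrow> ('m \<Rightarrow> (real^'d) \<times> real) \<Rightarrow> ('m \<Rightarrow> (real^'d) \<times> real)
    \<Rightarrow> ('n::finite \<Rightarrow> real^'d) \<Rightarrow> real^'n^'n" where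
  "Hmat S W1 W2 X = (\<chi> i j. (1 / real CARD('m)) * (xt X i \<bullet> xt X j) *
       (\<Sum>r\<in>S. if W1 r \<bullet> xt X i \<ge> 0 \<and> W2 r \<bullet> xt X j \<ge> 0 then 1 else 0))"

end

theory Submission
  imports Defs
begin

text \<open>One gradient step moves the preactivation of neuron \<open>r\<close> at \<open>x\<^sub>j\<close> by
  \<open>a\<^sub>r d\<^sub>r\<close> with \<open>d\<^sub>r = (2\<eta>/\<surd>m) \<Sum>\<^sub>i 1{w\<^sub>r(k)\<cdot>x\<^sub>i \<ge> 0} x\<^sub>j\<cdot>x\<^sub>i (Pz)\<^sub>i\<close>.
  By convexity, the change of \<open>ReLU\<close> lies between \<open>ReLU'\<close> at the old and at the new
  preactivation times the step; the sign \<open>a\<^sub>r = \<plusminus>1\<close> decides which of the two is the lower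
  bound. Summing over neurons, the old gates of \<open>A\<close> together with the new gates of \<open>B\<close>
  give a lower bound for \<open>u(k+1) - u(k)\<close>, and the other way round an upper bound;
  these are the rows of \<open>2\<eta>(H\<^sup>+ + H\<tilde>\<^sup>-)Pz\<close> and \<open>2\<eta>(H\<tilde>\<^sup>+ + H\<^sup>-)Pz\<close>.\<close>

lemma relu_diff_ge: "relu' s * (s' - s) \<le> relu s' - relu s"
  by (auto simp: relu_def relu'_def)

lemma relu_diff_le: "relu s' - relu s \<le> relu' s' * (s' - s)"
  by (auto simp: relu_def relu'_def)

lemma signed_relu_diff_bounds:
  assumes "a = 1 \<or> a = -1" and "s' = s + a * d"
  shows "(if a = 1 then relu' s else relu' s') * d \<le> a * (relu s' - relu s)"
    and "a * (relu s' - relu s) \<le> (if a = 1 then relu' s' else relu' s) * d"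
  using assms relu_diff_ge[of s s'] relu_diff_le[of s' s] by auto

lemma inner_xt: "(p, q) \<bullet> xt X i = (p \<bullet> X i + q) / sqrt 2"
  by (simp add: xt_def inner_Pair divide_simps)

lemma xt_inner_xt: "xt X i \<bullet> xt X j = (X i \<bullet> X j + 1) / 2"
  by (simp add: xt_def inner_Pair power2_eq_square[symmetric] power_divide)

lemma relu'_inner_xt: "relu' ((p, q) \<bullet> xt X i) = relu' (p \<bullet> X i + q)"
  by (simp add: relu'_def inner_xt divide_simps)

lemma loss_grad_u_symmetric: "transpose P = P \<Longrightarrow> loss_grad_u P y u = - (P *v (y - u))"
  by (simp add: loss_grad_u_def vec_eq_iff matrix_vector_mult_def sum.distrib
      algebra_simps sum_distrib_left)

lemma Hmat_mult_vec:
  "(Hmat S U W X *v v) $ j = (1 / real CARD('m)) *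
     (\<Sum>r\<in>S. relu' (U r \<bullet> xt X j) * (\<Sum>i\<in>UNIV. relu' (W r \<bullet> xt X i) * (xt X j \<bullet> xt X i) * v $ i))"
  for S :: "'m::finite set" and X :: "'n::finite \<Rightarrow> real^'d"
proof -
  have "(Hmat S U W X *v v) $ j = (\<Sum>i\<in>UNIV. \<Sum>r\<in>S. (1 / real CARD('m)) *
      (relu' (U r \<bullet> xt X j) * (relu' (W r \<bullet> xt X i) * (xt X j \<bullet> xt X i) * v $ i)))"
    unfolding Hmat_def matrix_vector_mult_def
    by (auto simp: sum_distrib_left sum_distrib_right relu'_def intro!: sum.cong)
  also have "\<dots> = (\<Sum>r\<in>S. \<Sum>i\<in>UNIV. (1 / real CARD('m)) *
      (relu' (U r \<bullet> xt X j) * (relu' (W r \<bullet> xt X i) * (xt X j \<bullet> xt X i) * v $ i)))"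
    by (rule sum.swap)
  finally show ?thesis
    by (simp add: sum_distrib_left)
qed

lemma Hmat_signs_mult_vec:
  fixes a :: "'m::finite \<Rightarrow> real" and X :: "'n::finite \<Rightarrow> real^'d"
  assumes signs: "\<forall>r. a r = 1 \<or> a r = -1"
  shows "((Hmat {r. a r = 1} U W X + Hmat {r. a r = -1} U' W X) *v v) $ j
    = (1 / real CARD('m)) * (\<Sum>r\<in>UNIV.
        (if a r = 1 then relu' (U r \<bullet> xt X j) else relu' (U' r \<bullet> xt X j)) *
        (\<Sum>i\<in>UNIV. relu' (W r \<bullet> xt X i) * (xt X j \<bullet> xt X i) * v $ i))"
proof -
  have "{r. a r = -1} = {r. a r \<noteq> 1}"
    using signs by force
  then show ?thesis
    by (simp add: matrix_vector_mult_add_rdistrib Hmat_mult_vec if_distrib[of "\<lambda>g. g * _"]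
        sum.If_cases Int_def Compl_eq add_divide_distrib)
qed

lemma outputs_diff:
  "outputs a w' b' X $ j - outputs a w b X $ j = (1 / sqrt (real CARD('m))) *
     (\<Sum>r\<in>UNIV. a r * (relu (w' r \<bullet> X j + b' r) - relu (w r \<bullet> X j + b r)))"
  for a :: "'m::finite \<Rightarrow> real"
  by (simp add: outputs_def net_def sum_subtractf algebra_simps)

lemma gd_step_preactivation:
  fixes a :: "'m::finite \<Rightarrow> real" and X :: "'n::finite \<Rightarrow> real^'d"
  assumes P_sym: "transpose P = P" and step: "gd_step a X y P \<eta> (w, b) = (w', b')"
  shows "w' r \<bullet> X j + b' r = w r \<bullet> X j + b r + a r * (2 * \<eta> / sqrt (real CARD('m)) *
     (\<Sum>i\<in>UNIV. relu' (w r \<bullet> X i + b r) * (xt X j \<bullet> xt X i) * (P *v (y - outputs a w b X)) $ i))"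
proof -
  define v where "v = P *v (y - outputs a w b X)"
  define c where "c i = - v $ i * (1 / sqrt (real CARD('m))) * a r * relu' (w r \<bullet> X i + b r)" for i
  have w': "w' r = w r - \<eta> *\<^sub>R (\<Sum>i\<in>UNIV. c i *\<^sub>R X i)"
    and b': "b' r = b r - \<eta> * (\<Sum>i\<in>UNIV. c i)"
    using step by (auto simp: gd_step_def loss_grad_u_symmetric[OF P_sym] Let_def c_def v_def)
  have "w' r \<bullet> X j + b' r = w r \<bullet> X j + b r - \<eta> * (\<Sum>i\<in>UNIV. c i * (X i \<bullet> X j)) - \<eta> * (\<Sum>i\<in>UNIV. c i)"
    by (simp add: w' b' inner_diff_left inner_sum_left)
  also have "\<dots> = w r \<bullet> X j + b r + (\<Sum>i\<in>UNIV. - \<eta> * (c i * (X i \<bullet> X j + 1)))"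
    by (simp add: sum_distrib_left sum.distrib sum_subtractf sum_negf algebra_simps)
  also have "(\<Sum>i\<in>UNIV. - \<eta> * (c i * (X i \<bullet> X j + 1))) = (\<Sum>i\<in>UNIV.
      a r * (2 * \<eta> / sqrt (real CARD('m))) * (relu' (w r \<bullet> X i + b r) * (xt X j \<bullet> xt X i) * v $ i))"
    by (intro sum.cong) (simp_all add: c_def xt_inner_xt inner_commute field_simps)
  finally show ?thesis
    by (simp add: v_def sum_distrib_left mult.assoc)
qed

lemma gd_step_outputs_diff_bounds:
  fixes a :: "'m::finite \<Rightarrow> real" and X :: "'n::finite \<Rightarrow> real^'d"
  assumes signs: "\<forall>r. a r = 1 \<or> a r = -1" and P_sym: "transpose P = P"
    and step: "gd_step a X y P \<eta> (w, b) = (w', b')"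
  defines "W \<equiv> \<lambda>r. (w r, b r)" and "W' \<equiv> \<lambda>r. (w' r, b' r)"
    and "v \<equiv> P *v (y - outputs a w b X)"
  shows "2 * \<eta> * ((Hmat {r. a r = 1} W W X + Hmat {r. a r = -1} W' W X) *v v) $ j
           \<le> outputs a w' b' X $ j - outputs a w b X $ j"
    and "outputs a w' b' X $ j - outputs a w b X $ j
           \<le> 2 * \<eta> * ((Hmat {r. a r = 1} W' W X + Hmat {r. a r = -1} W W X) *v v) $ j"
proof -
  define sm where "sm = sqrt (real CARD('m))"
  define s where "s r = w r \<bullet> X j + b r" for r
  define s' where "s' r = w' r \<bullet> X j + b' r" for r
  define d where "d r = 2 * \<eta> / sm *
    (\<Sum>i\<in>UNIV. relu' (w r \<bullet> X i + b r) * (xt X j \<bullet> xt X i) * v $ i)" for r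
  have sm_pos: "sm > 0"
    by (simp add: sm_def)
  have s': "s' r = s r + a r * d r" for r
    using gd_step_preactivation[OF P_sym step] by (simp add: s_def s'_def d_def sm_def v_def)
  have out: "outputs a w' b' X $ j - outputs a w b X $ j
      = (1 / sm) * (\<Sum>r\<in>UNIV. a r * (relu (s' r) - relu (s r)))"
    by (simp add: outputs_diff s_def s'_def sm_def)
  have H: "2 * \<eta> * ((Hmat {r. a r = 1} U W X + Hmat {r. a r = -1} U' W X) *v v) $ j
      = (1 / sm) * (\<Sum>r\<in>UNIV. (if a r = 1 then relu' (U r \<bullet> xt X j) else relu' (U' r \<bullet> xt X j)) * d r)"
    for U U'
  proof -
    have "sm * sm = real CARD('m)"
      by (simp add: sm_def)
    then show ?thesis
      unfolding Hmat_signs_mult_vec[OF signs] using sm_pos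
      by (simp add: W_def relu'_inner_xt d_def sum_distrib_left field_simps)
  qed
  have gates: "relu' (W r \<bullet> xt X j) = relu' (s r)" "relu' (W' r \<bullet> xt X j) = relu' (s' r)" for r
    by (simp_all add: W_def W'_def s_def s'_def relu'_inner_xt)
  show "2 * \<eta> * ((Hmat {r. a r = 1} W W X + Hmat {r. a r = -1} W' W X) *v v) $ j
           \<le> outputs a w' b' X $ j - outputs a w b X $ j"
    unfolding H out gates using sm_pos signs s'
    by (intro mult_left_mono sum_mono signed_relu_diff_bounds(1)) auto
  show "outputs a w' b' X $ j - outputs a w b X $ j
           \<le> 2 * \<eta> * ((Hmat {r. a r = 1} W' W X + Hmat {r. a r = -1} W W X) *v v) $ j"
    unfolding H out gates using sm_pos signs s'
    by (intro mult_left_mono sum_mono signed_relu_diff_bounds(2)) auto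
qed

lemma wt_eq: "gd_traj a X y P \<eta> w0 b0 k = (w, b) \<Longrightarrow> wt a X y P \<eta> w0 b0 k = (\<lambda>r. (w r, b r))"
  by (simp add: wt_def fun_eq_iff)

lemma u_k_eq: "gd_traj a X y P \<eta> w0 b0 k = (w, b) \<Longrightarrow> u_k a X y P \<eta> w0 b0 k = outputs a w b X"
  by (simp add: u_k_def)

lemma mat_1_minus_mult_vec:
  "((mat 1 - c *\<^sub>R (H ** P)) *v z) $ j = z $ j - c * (H *v (P *v z)) $ j"
  for H P :: "real^'n::finite^'n"
  by (simp add: matrix_vector_mult_diff_rdistrib scaleR_matrix_vector_assoc[symmetric]
      matrix_vector_mul_assoc)

theorem lemma1:
  fixes X :: "'n::finite \<Rightarrow> real^'d" and y :: "real^'n" and P :: "real^'n^'n"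
    and a :: "'m::finite \<Rightarrow> real" and \<eta> :: real
    and w0 :: "'m \<Rightarrow> real^'d" and b0 :: "'m \<Rightarrow> real" and k :: nat
  assumes distinct: "inj X"
    and sphere: "\<forall>i. norm (X i) = 1"
    and signs: "\<forall>r. a r = 1 \<or> a r = -1"
    and P_sym: "transpose P = P"
    and P_pd: "\<forall>v. v \<noteq> 0 \<longrightarrow> v \<bullet> (P *v v) > 0"
    and eta_pos: "\<eta> > 0"
  shows "let u = u_k a X y P \<eta> w0 b0; W = wt a X y P \<eta> w0 b0;
             A = {r. a r = 1}; B = {r. a r = -1};
             z = (\<lambda>k. y - u k);
             Hp = Hmat A (W k) (W k) X; Hm = Hmat B (W k) (W k) X;
             Htp = Hmat A (W (Suc k)) (W k) X; Htm = Hmat B (W (Suc k)) (W k) X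
         in \<forall>i. ((mat 1 - (2 * \<eta>) *\<^sub>R ((Htp + Hm) ** P)) *v z k) $ i \<le> z (Suc k) $ i
              \<and> z (Suc k) $ i \<le> ((mat 1 - (2 * \<eta>) *\<^sub>R ((Hp + Htm) ** P)) *v z k) $ i"
proof -
  obtain w b where wb: "gd_traj a X y P \<eta> w0 b0 k = (w, b)"
    by fastforce
  obtain w' b' where step: "gd_step a X y P \<eta> (w, b) = (w', b')"
    by fastforce
  have traj: "gd_traj a X y P \<eta> w0 b0 (Suc k) = (w', b')"
    by (simp add: wb step)
  note bounds = gd_step_outputs_diff_bounds[OF signs P_sym step]
  show ?thesis
    unfolding Let_def wt_eq[OF wb] wt_eq[OF traj] u_k_eq[OF wb] u_k_eq[OF traj] mat_1_minus_mult_vec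
  proof (intro allI conjI)
    fix j
    let ?W = "\<lambda>r. (w r, b r)" and ?W' = "\<lambda>r. (w' r, b' r)"
    let ?A = "{r. a r = 1}" and ?B = "{r. a r = -1}" and ?z = "y - outputs a w b X"
    show "?z $ j - 2 * \<eta> * ((Hmat ?A ?W' ?W X + Hmat ?B ?W ?W X) *v (P *v ?z)) $ j
        \<le> (y - outputs a w' b' X) $ j"
      using bounds(2)[of j] by simp
    show "(y - outputs a w' b' X) $ j
        \<le> ?z $ j - 2 * \<eta> * ((Hmat ?A ?W ?W X + Hmat ?B ?W' ?W X) *v (P *v ?z)) $ j"
      using bounds(1)[of j] by simp
  qed
qed

end
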